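(* Let $T>0$, $x_0,y_0\in\mathbb{R}$ and $\gamma_P,\gamma_A>0$. For every contract $(W,a)\in\mathcal{C}_{PC}$, $$\mathbb{E}\left[\left|U_P\left(X_T^a-\int_0^T\kappa(a_t)\,dt\right)\right|^{\frac{\gamma_A}{\gamma_A+\gamma_P}}\right]^{\frac{\gamma_A+\gamma_P}{\gamma_A}}\geq \exp(-\gamma_P x_0)\exp\left(T\gamma_P\left(-\widetilde{\kappa}(1)+\frac{\gamma_P\gamma_A}{2(\gamma_A+\gamma_P)}\right)\right),$$ and consequently $$\mathbb{E}\left[U_P\left(X_T^a-W\right)\right]\leq U_P(x_0-y_0)\exp\left(\gamma_P T\left(-\widetilde{\kappa}(1)+\frac{\gamma_P\gamma_A}{2(\gamma_A+\gamma_P)}\right)\right).$$ Moreover, for the constant action $a^*_t:=\kappa^*(1)$, $t\in[0,T]$, $$\mathbb{E}\left[\left|U_P\left(X_T^{a^*}-\int_0^T\kappa(a^*_t)\,dt\right)\right|^{\frac{\gamma_A}{\gamma_A+\gamma_P}}\right]^{\frac{\gamma_A+\gamma_P}{\gamma_A}}= \exp(-\gamma_P x_0)\exp\left(\gamma_P T\left(-\widetilde{\kappa}(1)+\frac{\gamma_P\gamma_A}{2(\gamma_A+\gamma_P)}\right)\right).$$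
   Context: Fix $T>0$. Let $(\Omega,\mathcal{F},\mathbb{P})$ be a probability space carrying a standard one-dimensional Brownian motion $B=(B_t)_{t\in[0,T]}$, and let $\mathbb{F}=(\mathcal{F}_t)_{t\in[0,T]}$ be its natural completed filtration. Let $\mathbb{H}_2$ be the set of $\mathbb{F}$-predictable processes $a=(a_t)_{t\in[0,T]}$ with values in $[0,\infty)$ such that $\mathbb{E}[\exp(q\int_0^T|a_t|^2dt)]<\infty$ for all $q>0$. For $a\in\mathbb{H}_2$ and a fixed $x_0\in\mathbb{R}$, set $X_t^a=x_0+\int_0^t a_s\,ds+B_t$. Let $\mathcal{W}$ be the set of $\mathcal{F}_T$-measurable random variables $W$ with $\mathbb{E}[\exp(qW)]<\infty$ for all $q\in\mathbb{R}\setminus\{0\}$, and $\mathcal{C}=\{(W,a):W\in\mathcal{W},a\in\mathbb{H}_2\}$. The cost function $\kappa:[0,\infty)\to\mathbb{R}$ is strictly convex, continuous, non-decreasing, with invertible derivative $\kappa'$; $\widetilde{\kappa}(p)=\sup_{x\ge0}(px-\kappa(x))$ for $p\ge0$ and $\kappa^*(p)=\arg\sup_{x\ge0}(px-\kappa(x))=(\kappa')^{-1}(p)\ge0$; in particular $\widetilde{\kappa}(1)=\kappa^*(1)-\kappa(\kappa^*(1))$. With $\gamma_P,\gamma_A>0$, $U_P(x)=-\exp(-\gamma_P x)$ and $U_A(x)=-\exp(-\gamma_A x)$. For $y_0\in\mathbb{R}$, the participation constraint (PC) of a contract $(W,a)\in\mathcal{C}$ is $\mathbb{E}[U_A(W-\int_0^T\kappa(a_t)dt)]\ge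 U_A(y_0)$, and $\mathcal{C}_{PC}$ is the set of contracts in $\mathcal{C}$ satisfying the PC. *)

theory Defs
  imports "HOL-Probability.Probability"
begin

definition eexp :: "ereal \<Rightarrow> ennreal" where
  "eexp x = (case x of ereal r \<Rightarrow> ennreal (exp r) | PInfty \<Rightarrow> \<infinity> | MInfty \<Rightarrow> 0)"

text \<open>power x^r of a nonnegative extended real, for exponents r > 0\<close>
definition ennpowr :: "ennreal \<Rightarrow> real \<Rightarrow> ennreal" where
  "ennpowr x r = (if x = \<infinity> then \<infinity> else ennreal (enn2real x powr r))"

text \<open>|U(x)| = exp(-gamma x) for the exponential utility U(x) = -exp(-gamma x), on extended reals\<close>
definition absU :: "real \<Rightarrow> ereal \<Rightarrow> ennreal" where
  "absU \<gamma> x = eexp (- ereal \<gamma> * x)"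

definition U :: "real \<Rightarrow> real \<Rightarrow> real" where
  "U \<gamma> x = - exp (- \<gamma> * x)"

definition strictly_convex_on :: "real set \<Rightarrow> (real \<Rightarrow> real) \<Rightarrow> bool" where
  "strictly_convex_on S f \<longleftrightarrow> convex S \<and>
     (\<forall>x\<in>S. \<forall>y\<in>S. \<forall>u. x \<noteq> y \<and> 0 < u \<and> u < 1 \<longrightarrow>
        f (u * x + (1 - u) * y) < u * f x + (1 - u) * f y)"

definition kappa_tilde :: "(real \<Rightarrow> real) \<Rightarrow> real \<Rightarrow> real" where
  "kappa_tilde \<kappa> p = (SUP x\<in>{0..}. p * x - \<kappa> x)"

definition kappa_star :: "(real \<Rightarrow> real) \<Rightarrow> real \<Rightarrow> real" where
  "kappa_star \<kappa> p = (THE x. x \<ge> 0 \<and> (\<forall>y\<ge>0. p * y - \<kappa> y \<le> p * x - \<kappa> x))"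

definition cost_function :: "(real \<Rightarrow> real) \<Rightarrow> bool" where
  "cost_function \<kappa> \<longleftrightarrow>
     strictly_convex_on {0..} \<kappa> \<and> continuous_on {0..} \<kappa> \<and> mono_on {0..} \<kappa> \<and>
     (\<exists>\<kappa>'. (\<forall>x\<ge>0. (\<kappa> has_real_derivative \<kappa>' x) (at x within {0..})) \<and>
            bij_betw \<kappa>' {0..} {0..})"

definition natural_sigma :: "'a measure \<Rightarrow> (real \<Rightarrow> 'a \<Rightarrow> real) \<Rightarrow> real \<Rightarrow> 'a set set" where
  "natural_sigma M B s = sigma_sets (space M)
     {B u -` A \<inter> space M | u A. u \<in> {0..s} \<and> A \<in> sets borel}"

definition brownian_motion :: "'a measure \<Rightarrow> real \<Rightarrow> (real \<Rightarrow> 'a \<Rightarrow> real) \<Rightarrow> bool" where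
  "brownian_motion M T B \<longleftrightarrow>
     prob_space M \<and>
     (\<forall>t\<in>{0..T}. B t \<in> borel_measurable M) \<and>
     (\<forall>\<omega>\<in>space M. B 0 \<omega> = 0 \<and> continuous_on {0..T} (\<lambda>t. B t \<omega>)) \<and>
     (\<forall>s t. 0 \<le> s \<and> s < t \<and> t \<le> T \<longrightarrow>
        distributed M lborel (\<lambda>\<omega>. B t \<omega> - B s \<omega>) (normal_density 0 (sqrt (t - s))) \<and>
        prob_space.indep_set M (natural_sigma M B s)
          (sigma_sets (space M) {(\<lambda>\<omega>. B t \<omega> - B s \<omega>) -` A \<inter> space M | A. A \<in> sets borel}))"

definition filt :: "'a measure \<Rightarrow> (real \<Rightarrow> 'a \<Rightarrow> real) \<Rightarrow> real \<Rightarrow> 'a set set" where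
  "filt M B t = sigma_sets (space M) (natural_sigma M B t \<union> null_sets M)"

definition predictable_sigma :: "'a measure \<Rightarrow> real \<Rightarrow> (real \<Rightarrow> 'a \<Rightarrow> real) \<Rightarrow> (real \<times> 'a) measure" where
  "predictable_sigma M T B = sigma ({0..T} \<times> space M)
     ({{0} \<times> A | A. A \<in> filt M B 0} \<union>
      {{s<..t} \<times> A | s t A. 0 \<le> s \<and> s < t \<and> t \<le> T \<and> A \<in> filt M B s})"

definition H2 :: "'a measure \<Rightarrow> real \<Rightarrow> (real \<Rightarrow> 'a \<Rightarrow> real) \<Rightarrow> (real \<Rightarrow> 'a \<Rightarrow> real) set" where
  "H2 M T B = {a. (\<lambda>(t, \<omega>). a t \<omega>) \<in> measurable (predictable_sigma M T B) borel \<and>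
     (\<forall>t\<in>{0..T}. \<forall>\<omega>\<in>space M. a t \<omega> \<ge> 0) \<and>
     (\<forall>q>0. (\<integral>\<^sup>+\<omega>. eexp (ereal q * enn2ereal
              (\<integral>\<^sup>+t. indicator {0..T} t * ennreal ((a t \<omega>)\<^sup>2) \<partial>lborel)) \<partial>M) < \<infinity>)}"

definition Wset :: "'a measure \<Rightarrow> real \<Rightarrow> (real \<Rightarrow> 'a \<Rightarrow> real) \<Rightarrow> ('a \<Rightarrow> real) set" where
  "Wset M T B = {W. W \<in> measurable (sigma (space M) (filt M B T)) borel \<and>
     (\<forall>q. q \<noteq> 0 \<longrightarrow> (\<integral>\<^sup>+\<omega>. ennreal (exp (q * W \<omega>)) \<partial>M) < \<infinity>)}"

definition XT :: "real \<Rightarrow> real \<Rightarrow> (real \<Rightarrow> 'a \<Rightarrow> real) \<Rightarrow> (real \<Rightarrow> 'a \<Rightarrow> real) \<Rightarrow> 'a \<Rightarrow> real" where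
  "XT x0 T B a \<omega> = x0 + (\<integral>t\<in>{0..T}. a t \<omega> \<partial>lborel) + B T \<omega>"

text \<open>int_0^T kappa(a_t) dt, possibly +infinity (kappa(a_t) \<ge> kappa 0 since a \<ge> 0, kappa nondecreasing)\<close>
definition cost_int :: "(real \<Rightarrow> real) \<Rightarrow> real \<Rightarrow> (real \<Rightarrow> 'a \<Rightarrow> real) \<Rightarrow> 'a \<Rightarrow> ereal" where
  "cost_int \<kappa> T a \<omega> = ereal (T * \<kappa> 0) +
     enn2ereal (\<integral>\<^sup>+t. indicator {0..T} t * ennreal (\<kappa> (a t \<omega>) - \<kappa> 0) \<partial>lborel)"

text \<open>participation constraint E[U_A(W - int kappa(a))] \<ge> U_A(y0), with E of the negative
  variable written as minus the expectation of its absolute value\<close>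
definition PC :: "'a measure \<Rightarrow> real \<Rightarrow> (real \<Rightarrow> real) \<Rightarrow> real \<Rightarrow> real \<Rightarrow> ('a \<Rightarrow> real) \<Rightarrow> (real \<Rightarrow> 'a \<Rightarrow> real) \<Rightarrow> bool" where
  "PC M T \<kappa> \<gamma>A y0 W a \<longleftrightarrow>
     - enn2ereal (\<integral>\<^sup>+\<omega>. absU \<gamma>A (ereal (W \<omega>) - cost_int \<kappa> T a \<omega>) \<partial>M) \<ge> ereal (U \<gamma>A y0)"

end

(*
  Fenchel's inequality a - kappa a <= kappa_tilde 1 bounds the accumulated cost from below, so
  X_T - int kappa(a) <= x0 + B_T + T kappa_tilde 1, with equality for the constant action
  kappa_star 1. The r-th power of |U_P| of the right-hand side has an explicit Gaussian
  expectation, which gives the first bound and the equality for kappa_star 1.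

  Since gamma_P r = gamma_A (1 - r), the wage cancels in
  |U_P(X - K)|^r = |U_P(X - W)|^r |U_A(W - K)|^(1 - r), where K = int kappa(a).
  Hoelder's inequality with exponents 1/r and 1/(1 - r), together with the participation
  constraint E |U_A(W - K)| <= exp(- gamma_A y0), turns the first bound into the bound on the
  principal's expected utility.
*)
theory Submission
  imports Defs
begin

section \<open>Powers of extended nonnegative reals\<close>

lemma ennpowr_ennreal: "x \<ge> 0 \<Longrightarrow> ennpowr (ennreal x) s = ennreal (x powr s)"
  by (simp add: ennpowr_def)

lemma ennpowr_top [simp]: "ennpowr top s = top"
  by (simp add: ennpowr_def)

lemma ennpowr_zero [simp]: "ennpowr 0 s = 0"
  by (simp add: ennpowr_def)

lemma ennpowr_exp: "ennpowr (ennreal (exp y)) s = ennreal (exp (s * y))"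
  by (simp add: ennpowr_ennreal exp_powr_real mult.commute)

lemma ennpowr_mono:
  assumes "x \<le> y" "s \<ge> 0"
  shows "ennpowr x s \<le> ennpowr y s"
proof (cases "y = \<infinity>")
  case False
  with assms obtain a b where "x = ennreal a" "y = ennreal b" "0 \<le> a" "a \<le> b"
    by (cases x; cases y) (auto simp: top_unique)
  then show ?thesis
    using assms by (simp add: ennpowr_ennreal powr_mono2 ennreal_leI)
qed simp

lemma ennpowr_mult:
  assumes "s > 0"
  shows "ennpowr (x * y) s = ennpowr x s * ennpowr y s"
proof (cases x; cases y)
  fix a b assume "x = ennreal a" "0 \<le> a" "y = ennreal b" "0 \<le> b"
  then show ?thesis by (simp add: ennpowr_ennreal powr_mult flip: ennreal_mult)
qed (use assms in \<open>auto simp: ennpowr_ennreal ennreal_mult_top ennreal_top_mult\<close>)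

lemma ennpowr_one [simp]: "ennpowr x 1 = x"
  by (cases x) (simp_all add: ennpowr_ennreal)

lemma ennpowr_ennpowr: "ennpowr (ennpowr x r) s = ennpowr x (r * s)"
  by (cases x) (simp_all add: ennpowr_ennreal powr_powr)

section \<open>Hoelder's inequality for nonnegative integrals\<close>

lemma ennreal_Youngs_inequality:
  assumes "0 < r" "r < 1"
  shows "ennpowr u r * ennpowr v (1 - r) \<le> ennreal r * u + ennreal (1 - r) * v"
proof (cases "u = \<infinity> \<or> v = \<infinity>")
  case True
  then show ?thesis using assms by (auto simp: ennreal_mult_top)
next
  case False
  then obtain a b where ab: "u = ennreal a" "v = ennreal b" "0 \<le> a" "0 \<le> b"
    by (cases u; cases v) auto
  have "a powr r * b powr (1 - r) \<le> r * a + (1 - r) * b"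
  proof (cases "a = 0 \<or> b = 0")
    case False
    then show ?thesis using ab assms by (intro Youngs_inequality_0) auto
  qed (use ab assms in auto)
  then show ?thesis
    using ab assms by (simp add: ennpowr_ennreal ennreal_leI flip: ennreal_mult ennreal_plus)
qed

lemma ennpowr_eq_0_iff: "ennpowr x s = 0 \<longleftrightarrow> x = 0"
  by (cases x) (auto simp: ennpowr_ennreal)

lemma nn_integral_Hoelder:
  fixes f g :: "'a \<Rightarrow> ennreal"
  assumes f: "f \<in> borel_measurable M" and g: "g \<in> borel_measurable M" and r: "0 < r" "r < 1"
  shows "(\<integral>\<^sup>+x. ennpowr (f x) r * ennpowr (g x) (1 - r) \<partial>M)
           \<le> ennpowr (\<integral>\<^sup>+x. f x \<partial>M) r * ennpowr (\<integral>\<^sup>+x. g x \<partial>M) (1 - r)"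
    (is "?L \<le> ennpowr ?F r * ennpowr ?G (1 - r)")
proof -
  consider (null) "?F = 0 \<or> ?G = 0" | (infinite) "?F \<noteq> 0" "?G \<noteq> 0" "?F = top \<or> ?G = top"
    | (finite) a b where "?F = ennreal a" "?G = ennreal b" "a > 0" "b > 0"
    by (cases ?F; cases ?G) (auto simp: top_unique le_less)
  then show ?thesis
  proof cases
    case null
    then have "AE x in M. f x = 0 \<or> g x = 0"
      by (auto simp: nn_integral_0_iff_AE f g)
    then have "?L = (\<integral>\<^sup>+x. 0 \<partial>M)"
      by (intro nn_integral_cong_AE) auto
    then show ?thesis by simp
  next
    case infinite
    then show ?thesis
      using r by (auto simp: ennpowr_eq_0_iff ennreal_mult_top ennreal_top_mult)
  next
    case finite
    define f' where "f' x = ennreal (1 / a) * f x" for x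
    define g' where "g' x = ennreal (1 / b) * g x" for x
    have f': "(\<integral>\<^sup>+x. f' x \<partial>M) = 1" and g': "(\<integral>\<^sup>+x. g' x \<partial>M) = 1"
      using finite by (simp_all add: f'_def g'_def nn_integral_cmult f g flip: ennreal_mult)
    have "?L = (\<integral>\<^sup>+x. ennreal (a powr r * b powr (1 - r)) * (ennpowr (f' x) r * ennpowr (g' x) (1 - r)) \<partial>M)"
    proof (rule nn_integral_cong)
      fix x
      have "f x = ennreal a * f' x" "g x = ennreal b * g' x"
        using finite by (simp_all add: f'_def g'_def flip: mult.assoc ennreal_mult)
      then show "ennpowr (f x) r * ennpowr (g x) (1 - r)
          = ennreal (a powr r * b powr (1 - r)) * (ennpowr (f' x) r * ennpowr (g' x) (1 - r))"
        using finite r by (simp add: ennpowr_mult ennpowr_ennreal ennreal_mult' mult_ac)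
    qed
    also have "\<dots> \<le> (\<integral>\<^sup>+x. ennreal (a powr r * b powr (1 - r)) * (ennreal r * f' x + ennreal (1 - r) * g' x) \<partial>M)"
      by (intro nn_integral_mono mult_left_mono ennreal_Youngs_inequality r) simp
    also have "\<dots> = ennreal (a powr r * b powr (1 - r))"
    proof -
      have "f' \<in> borel_measurable M" "g' \<in> borel_measurable M"
        using f g unfolding f'_def[abs_def] g'_def[abs_def] by simp_all
      then show ?thesis
        using r by (simp add: nn_integral_cmult nn_integral_add f' g' flip: ennreal_plus)
    qed
    finally show ?thesis
      using finite by (simp add: ennpowr_ennreal ennreal_mult')
  qed
qed

section \<open>The convex conjugate of the cost function\<close>

lemma convex_on_imp_above_tangent_within:
  fixes f :: "real \<Rightarrow> real"
  assumes cvx: "convex_on A f" and x: "x \<in> A" and y: "y \<in> A"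
    and deriv: "(f has_real_derivative D) (at x within A)"
  shows "D * (y - x) \<le> f y - f x"
proof -
  define h where "h t = x + t * (y - x)" for t
  have hA: "h ` {0..1} \<subseteq> A"
    using convexD_alt[OF convex_on_imp_convex[OF cvx] x y] by (auto simp: h_def algebra_simps)
  have "(f \<circ> h has_real_derivative D * (y - x)) (at 0 within {0..1})"
    unfolding h_def
    by (rule DERIV_image_chain[OF has_field_derivative_subset[OF _ hA[unfolded h_def]]])
       (auto intro!: derivative_eq_intros simp: deriv)
  then have lim: "((\<lambda>t. (f (h t) - f x) / t) \<longlongrightarrow> D * (y - x)) (at_right 0)"
    by (simp add: has_field_derivative_iff h_def at_within_Icc_at_right)
  have "eventually (\<lambda>t. t \<in> {0<..<1}) (at_right (0::real))"
    by (rule eventually_at_right_real) simp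
  then have "eventually (\<lambda>t. (f (h t) - f x) / t \<le> f y - f x) (at_right 0)"
  proof eventually_elim
    case (elim t)
    have "f (h t) \<le> (1 - t) * f x + t * f y"
      using convex_onD[OF cvx, of t x y] elim x y by (simp add: h_def algebra_simps)
    then show ?case
      using elim by (simp add: field_simps)
  qed
  then show ?thesis
    by (rule tendsto_le[OF trivial_limit_at_right_real tendsto_const lim, rotated])
qed

lemma strictly_convex_onD:
  assumes "strictly_convex_on S f" "x \<in> S" "y \<in> S" "x \<noteq> y" "0 < u" "u < 1"
  shows "f (u * x + (1 - u) * y) < u * f x + (1 - u) * f y"
  using assms unfolding strictly_convex_on_def by blast

lemma strictly_convex_on_imp_convex_on:
  fixes f :: "real \<Rightarrow> real"
  assumes "strictly_convex_on S f"
  shows "convex_on S f"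
proof (rule convex_onI)
  fix t x y :: real assume "0 < t" "t < 1" "x \<in> S" "y \<in> S"
  then have "x \<noteq> y \<Longrightarrow> f ((1 - t) * x + (1 - (1 - t)) * y) < (1 - t) * f x + (1 - (1 - t)) * f y"
    by (intro strictly_convex_onD[OF assms]) auto
  then show "f ((1 - t) *\<^sub>R x + t *\<^sub>R y) \<le> (1 - t) * f x + t * f y"
    by (cases "x = y") (auto simp: algebra_simps)
qed (use assms in \<open>simp add: strictly_convex_on_def\<close>)

lemma strictly_convex_on_argmax_unique:
  assumes sc: "strictly_convex_on S f" and "x \<in> S" "z \<in> S"
    and x_max: "\<And>y. y \<in> S \<Longrightarrow> p * y - f y \<le> p * x - f x"
    and z_max: "\<And>y. y \<in> S \<Longrightarrow> p * y - f y \<le> p * z - f z"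
  shows "z = x"
proof (rule ccontr)
  assume "z \<noteq> x"
  define m where "m = (1/2) * z + (1 - 1/2) * x"
  have "m \<in> S"
    using sc \<open>x \<in> S\<close> \<open>z \<in> S\<close> unfolding strictly_convex_on_def m_def
    by (auto dest: convexD[of S z x "1/2" "1/2"])
  have "f m < (1/2) * f z + (1 - 1/2) * f x"
    unfolding m_def by (rule strictly_convex_onD) (use sc \<open>z \<noteq> x\<close> \<open>x \<in> S\<close> \<open>z \<in> S\<close> in auto)
  moreover have "p * z - f z = p * x - f x"
    using x_max[OF \<open>z \<in> S\<close>] z_max[OF \<open>x \<in> S\<close>] by simp
  ultimately show False
    using x_max[OF \<open>m \<in> S\<close>] by (simp add: m_def algebra_simps)
qed

lemma cost_function_conjugate:
  assumes kappa: "cost_function \<kappa>" and p: "p \<ge> 0"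
  shows "kappa_star \<kappa> p \<ge> 0"
    and "\<And>y. y \<ge> 0 \<Longrightarrow> p * y - \<kappa> y \<le> p * kappa_star \<kappa> p - \<kappa> (kappa_star \<kappa> p)"
    and "kappa_tilde \<kappa> p = p * kappa_star \<kappa> p - \<kappa> (kappa_star \<kappa> p)"
proof -
  obtain \<kappa>' where der: "\<And>x. x \<ge> 0 \<Longrightarrow> (\<kappa> has_real_derivative \<kappa>' x) (at x within {0..})"
    and bij: "bij_betw \<kappa>' {0..} {0..}" and sc: "strictly_convex_on {0..} \<kappa>"
    using kappa unfolding cost_function_def by blast
  obtain x where x: "x \<ge> 0" "\<kappa>' x = p"
    using bij p unfolding bij_betw_def by (metis atLeast_iff image_iff)
  have x_max: "p * y - \<kappa> y \<le> p * x - \<kappa> x" if "y \<ge> 0" for y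
    using convex_on_imp_above_tangent_within[OF strictly_convex_on_imp_convex_on[OF sc], of x y p]
      der[of x] x that by (simp add: algebra_simps)
  have "kappa_star \<kappa> p = x"
    unfolding kappa_star_def
  proof (rule the_equality)
    fix z assume "z \<ge> 0 \<and> (\<forall>y\<ge>0. p * y - \<kappa> y \<le> p * z - \<kappa> z)"
    then show "z = x"
      using strictly_convex_on_argmax_unique[OF sc, of x z p] x x_max by auto
  qed (use x x_max in auto)
  moreover have "kappa_tilde \<kappa> p = p * x - \<kappa> x"
    unfolding kappa_tilde_def by (rule cSup_eq_maximum) (use x x_max in auto)
  ultimately show "kappa_star \<kappa> p \<ge> 0"
    and "\<And>y. y \<ge> 0 \<Longrightarrow> p * y - \<kappa> y \<le> p * kappa_star \<kappa> p - \<kappa> (kappa_star \<kappa> p)"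
    and "kappa_tilde \<kappa> p = p * kappa_star \<kappa> p - \<kappa> (kappa_star \<kappa> p)"
    using x x_max by simp_all
qed

section \<open>Exponential moments of Brownian motion\<close>

lemma normal_density_mult_exp:
  assumes "\<sigma> > 0"
  shows "normal_density 0 \<sigma> x * exp (s * x) = exp (s\<^sup>2 * \<sigma>\<^sup>2 / 2) * normal_density (s * \<sigma>\<^sup>2) \<sigma> x"
proof -
  have "- (x - 0)\<^sup>2 / (2 * \<sigma>\<^sup>2) + s * x = s\<^sup>2 * \<sigma>\<^sup>2 / 2 + - (x - s * \<sigma>\<^sup>2)\<^sup>2 / (2 * \<sigma>\<^sup>2)"
    using assms by (simp add: field_simps power2_eq_square)
  then show ?thesis
    unfolding normal_density_def by (simp add: exp_add[symmetric] algebra_simps)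
qed

lemma brownian_motion_nn_integral_exp:
  assumes BM: "brownian_motion M T B" and T: "T > 0"
  shows "(\<integral>\<^sup>+\<omega>. exp (s * B T \<omega>) \<partial>M) = ennreal (exp (s\<^sup>2 * T / 2))"
proof -
  have distr: "distributed M lborel (\<lambda>\<omega>. B T \<omega> - B 0 \<omega>) (normal_density 0 (sqrt T))"
    using BM T unfolding brownian_motion_def by force
  have "(\<integral>\<^sup>+\<omega>. exp (s * B T \<omega>) \<partial>M) = (\<integral>\<^sup>+\<omega>. exp (s * (B T \<omega> - B 0 \<omega>)) \<partial>M)"
    using BM by (intro nn_integral_cong) (simp add: brownian_motion_def)
  also have "\<dots> = (\<integral>\<^sup>+x. ennreal (normal_density 0 (sqrt T) x) * ennreal (exp (s * x)) \<partial>lborel)"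
    by (rule distributed_nn_integral[OF distr, symmetric]) simp
  also have "\<dots> = (\<integral>\<^sup>+x. ennreal (exp (s\<^sup>2 * T / 2)) * ennreal (normal_density (s * T) (sqrt T) x) \<partial>lborel)"
    using normal_density_mult_exp[of "sqrt T" _ s] T by (simp flip: ennreal_mult)
  also have "\<dots> = ennreal (exp (s\<^sup>2 * T / 2))"
    using T by (simp add: nn_integral_cmult nn_integral_eq_integral)
  finally show ?thesis .
qed

section \<open>Measurability of contracts\<close>

lemma filt_subset_sets:
  assumes BM: "brownian_motion M T B" and s: "0 \<le> s" "s \<le> T"
  shows "filt M B s \<subseteq> sets M"
proof -
  have "natural_sigma M B s \<subseteq> sets M"
    unfolding natural_sigma_def
  proof (rule sets.sigma_sets_subset, safe)
    fix u and A :: "real set" assume "u \<in> {0..s}" "A \<in> sets borel"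
    moreover have "B u \<in> borel_measurable M"
      using BM \<open>u \<in> {0..s}\<close> s unfolding brownian_motion_def by auto
    ultimately show "B u -` A \<inter> space M \<in> sets M" by simp
  qed
  then show ?thesis
    unfolding filt_def by (intro sets.sigma_sets_subset) auto
qed

lemma Wset_measurable:
  assumes BM: "brownian_motion M T B" and T: "T \<ge> 0" and W: "W \<in> Wset M T B"
  shows "W \<in> borel_measurable M"
proof -
  have sub: "filt M B T \<subseteq> sets M"
    using filt_subset_sets[OF BM] T by auto
  moreover have "filt M B T \<subseteq> Pow (space M)"
    using sub sets.sets_into_space by blast
  ultimately have "measurable (sigma (space M) (filt M B T)) borel \<subseteq> borel_measurable M"
    by (intro measurable_mono) (auto simp: sets.sigma_sets_subset[OF sub])
  then show ?thesis
    using W unfolding Wset_def by auto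
qed

lemma sets_predictable_sigma_subset:
  assumes BM: "brownian_motion M T B" and T: "T \<ge> 0"
  shows "space (predictable_sigma M T B) = {0..T} \<times> space M"
    and "sets (predictable_sigma M T B) \<subseteq> sets (restrict_space (lborel \<Otimes>\<^sub>M M) ({0..T} \<times> space M))"
proof -
  define \<Omega> where "\<Omega> = {0..T} \<times> space M"
  define G where "G = {{0} \<times> A | A. A \<in> filt M B 0} \<union>
      {{s<..t} \<times> A | s t A. 0 \<le> s \<and> s < t \<and> t \<le> T \<and> A \<in> filt M B s}"
  have filt: "A \<in> sets M" if "A \<in> filt M B s" "0 \<le> s" "s \<le> T" for A s
    using filt_subset_sets[OF BM that(2,3)] that(1) by blast
  have G_sets: "G \<subseteq> sets (lborel \<Otimes>\<^sub>M M)" and G_Pow: "G \<subseteq> Pow \<Omega>"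
    using T by (auto simp: G_def \<Omega>_def dest!: filt dest: sets.sets_into_space)
  have \<Omega>: "\<Omega> \<in> sets (lborel \<Otimes>\<^sub>M M)"
    unfolding \<Omega>_def by auto
  show "space (predictable_sigma M T B) = {0..T} \<times> space M"
    using G_Pow unfolding predictable_sigma_def by (simp add: G_def \<Omega>_def)
  have "sets (predictable_sigma M T B) = sigma_sets \<Omega> G"
    using G_Pow unfolding predictable_sigma_def by (simp add: G_def \<Omega>_def)
  also have "\<dots> \<subseteq> sets (restrict_space (lborel \<Otimes>\<^sub>M M) \<Omega>)"
  proof (rule sets.sigma_sets_subset')
    have "X \<in> sets (restrict_space (lborel \<Otimes>\<^sub>M M) \<Omega>) \<longleftrightarrow> X \<subseteq> \<Omega> \<and> X \<in> sets (lborel \<Otimes>\<^sub>M M)" for X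
      using \<Omega> sets.sets_into_space[OF \<Omega>] by (subst sets_restrict_space_iff) auto
    then show "G \<subseteq> sets (restrict_space (lborel \<Otimes>\<^sub>M M) \<Omega>)" "\<Omega> \<in> sets (restrict_space (lborel \<Otimes>\<^sub>M M) \<Omega>)"
      using G_sets G_Pow \<Omega> by blast+
  qed
  finally show "sets (predictable_sigma M T B) \<subseteq> sets (restrict_space (lborel \<Otimes>\<^sub>M M) ({0..T} \<times> space M))"
    by (simp add: \<Omega>_def)
qed

lemma H2_measurable_product:
  assumes BM: "brownian_motion M T B" and T: "T \<ge> 0" and a: "a \<in> H2 M T B"
  shows "(\<lambda>(\<omega>, t). indicator {0..T} t * a t \<omega>) \<in> borel_measurable (M \<Otimes>\<^sub>M lborel)"
proof -
  define \<Omega> where "\<Omega> = {0..T} \<times> space M"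
  have \<Omega>: "\<Omega> \<in> sets (lborel \<Otimes>\<^sub>M M)"
    unfolding \<Omega>_def by auto
  have "(\<lambda>(t, \<omega>). a t \<omega>) \<in> measurable (predictable_sigma M T B) borel"
    using a unfolding H2_def by auto
  also have "measurable (predictable_sigma M T B) borel \<subseteq> measurable (restrict_space (lborel \<Otimes>\<^sub>M M) \<Omega>) borel"
    using sets_predictable_sigma_subset[OF BM T]
    by (intro measurable_mono) (auto simp: \<Omega>_def space_restrict_space2[OF \<Omega>[unfolded \<Omega>_def]])
  finally have "(\<lambda>x. if x \<in> \<Omega> then (\<lambda>(t, \<omega>). a t \<omega>) x else 0) \<in> borel_measurable (lborel \<Otimes>\<^sub>M M)"
    using \<Omega> by (subst (asm) measurable_restrict_space_iff) auto
  then have "(\<lambda>(\<omega>, t). (\<lambda>x. if x \<in> \<Omega> then (\<lambda>(t, \<omega>). a t \<omega>) x else 0) (t, \<omega>)) \<in> borel_measurable (M \<Otimes>\<^sub>M lborel)"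
    by (subst (asm) measurable_pair_swap_iff) simp
  then show ?thesis
    by (rule measurable_cong[THEN iffD1, rotated]) (auto simp: \<Omega>_def space_pair_measure)
qed

lemma XT_measurable:
  assumes BM: "brownian_motion M T B" and T: "T \<ge> 0" and a: "a \<in> H2 M T B"
  shows "XT x0 T B a \<in> borel_measurable M"
proof -
  have "(\<lambda>\<omega>. \<integral>t. indicator {0..T} t * a t \<omega> \<partial>lborel) \<in> borel_measurable M"
    using H2_measurable_product[OF BM T a] by (rule lborel.borel_measurable_lebesgue_integral)
  moreover have "B T \<in> borel_measurable M"
    using BM T unfolding brownian_motion_def by auto
  ultimately show ?thesis
    unfolding XT_def[abs_def] set_lebesgue_integral_def by simp
qed

lemma cost_int_measurable:
  assumes BM: "brownian_motion M T B" and T: "T \<ge> 0" and a: "a \<in> H2 M T B"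
    and cont: "continuous_on {0..} \<kappa>"
  shows "cost_int \<kappa> T a \<in> borel_measurable M"
proof -
  have "continuous_on UNIV (\<lambda>x. \<kappa> (max 0 x))"
    by (intro continuous_on_compose2[OF cont] continuous_intros) auto
  then have [measurable]: "(\<lambda>x. \<kappa> (max 0 x)) \<in> borel_measurable borel"
    by (rule borel_measurable_continuous_onI)
  have [measurable]: "(\<lambda>(\<omega>, t). indicator {0..T} t * a t \<omega>) \<in> borel_measurable (M \<Otimes>\<^sub>M lborel)"
    by (rule H2_measurable_product[OF BM T a])
  have "(\<lambda>\<omega>. \<integral>\<^sup>+t. indicator {0..T} t * ennreal (\<kappa> (max 0 (indicator {0..T} t * a t \<omega>)) - \<kappa> 0) \<partial>lborel)
      \<in> borel_measurable M"
    by measurable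
  moreover have "(\<integral>\<^sup>+t. indicator {0..T} t * ennreal (\<kappa> (max 0 (indicator {0..T} t * a t \<omega>)) - \<kappa> 0) \<partial>lborel)
      = (\<integral>\<^sup>+t. indicator {0..T} t * ennreal (\<kappa> (a t \<omega>) - \<kappa> 0) \<partial>lborel)" if "\<omega> \<in> space M" for \<omega>
    using a that by (intro nn_integral_cong) (auto simp: H2_def indicator_def max_absorb2)
  ultimately have "(\<lambda>\<omega>. \<integral>\<^sup>+t. indicator {0..T} t * ennreal (\<kappa> (a t \<omega>) - \<kappa> 0) \<partial>lborel) \<in> borel_measurable M"
    by (subst (asm) measurable_cong) auto
  then show ?thesis
    unfolding cost_int_def[abs_def] by measurable
qed

section \<open>Bounds for the principal\<close>

lemma absU_ereal: "absU \<gamma> (ereal u) = ennreal (exp (- \<gamma> * u))"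
  by (simp add: absU_def eexp_def)

lemma absU_antimono:
  assumes "z \<le> z'" "\<gamma> > 0"
  shows "absU \<gamma> z' \<le> absU \<gamma> z"
  using assms by (cases z; cases z') (auto simp: absU_def eexp_def ennreal_leI)

lemma borel_measurable_eexp [measurable]: "eexp \<in> borel_measurable borel"
proof -
  have eexp_eq: "eexp = (\<lambda>x. if x = \<infinity> then \<infinity> else if x = - \<infinity> then 0 else ennreal (exp (real_of_ereal x)))"
    by (auto simp: eexp_def fun_eq_iff split: ereal.split)
  show ?thesis
    by (subst eexp_eq) measurable
qed

lemma borel_measurable_absU [measurable]:
  "f \<in> borel_measurable M \<Longrightarrow> (\<lambda>x. absU \<gamma> (f x)) \<in> borel_measurable M"
  unfolding absU_def by measurable

lemma ennpowr_absU_split: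
  assumes "K \<noteq> - \<infinity>" "\<gamma>\<^sub>1 > 0" "\<gamma>\<^sub>2 > 0" "s > 0" "t > 0" "\<gamma>\<^sub>1 * s = \<gamma>\<^sub>2 * t"
  shows "ennpowr (absU \<gamma>\<^sub>1 (ereal x - K)) s
           = ennpowr (absU \<gamma>\<^sub>1 (ereal (x - w))) s * ennpowr (absU \<gamma>\<^sub>2 (ereal w - K)) t"
proof (cases K)
  case (real k)
  have "s * (- \<gamma>\<^sub>1 * (x - k)) - (s * (- \<gamma>\<^sub>1 * (x - w)) + t * (- \<gamma>\<^sub>2 * (w - k)))
      = (\<gamma>\<^sub>2 * t - \<gamma>\<^sub>1 * s) * (w - k)"
    by (simp add: algebra_simps)
  then have "s * (- \<gamma>\<^sub>1 * (x - k)) = s * (- \<gamma>\<^sub>1 * (x - w)) + t * (- \<gamma>\<^sub>2 * (w - k))"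
    using assms(6) by simp
  then show ?thesis
    using real by (simp add: absU_ereal ennpowr_exp flip: ennreal_mult exp_add)
next
  case PInf
  then show ?thesis
    using assms by (simp add: absU_def eexp_def ennpowr_exp ennreal_mult_top)
qed (use assms in simp)

text \<open>No integrability is assumed: a non-integrable \<open>f\<close> has Bochner integral \<open>0\<close>.\<close>

lemma integral_le_nn_integral:
  fixes f :: "'a \<Rightarrow> real"
  assumes "\<And>x. x \<in> space M \<Longrightarrow> ennreal (f x) \<le> g x"
  shows "ereal (integral\<^sup>L M f) \<le> enn2ereal (\<integral>\<^sup>+x. g x \<partial>M)"
proof (cases "integrable M f")
  case True
  have fin: "(\<integral>\<^sup>+x. ennreal (f x) \<partial>M) \<noteq> \<infinity>"
    using True by (rule integrableD)
  have "integral\<^sup>L M f \<le> enn2real (\<integral>\<^sup>+x. ennreal (f x) \<partial>M)"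
    using real_lebesgue_integral_def[OF True] by simp
  then have "ereal (integral\<^sup>L M f) \<le> enn2ereal (\<integral>\<^sup>+x. ennreal (f x) \<partial>M)"
    using fin by (cases "\<integral>\<^sup>+x. ennreal (f x) \<partial>M") auto
  also have "\<dots> \<le> enn2ereal (\<integral>\<^sup>+x. g x \<partial>M)"
    using assms by (simp add: less_eq_ennreal.rep_eq[symmetric] nn_integral_mono)
  finally show ?thesis .
qed (simp add: not_integrable_integral_eq zero_ereal_def[symmetric])

lemma cost_int_ge:
  assumes nonneg: "\<And>t. t \<in> {0..T} \<Longrightarrow> a t \<omega> \<ge> 0" and T: "T \<ge> 0"
    and k: "\<And>y. y \<ge> 0 \<Longrightarrow> y - \<kappa> y \<le> k"
  shows "ereal ((\<integral>t\<in>{0..T}. a t \<omega> \<partial>lborel) - T * k) \<le> cost_int \<kappa> T a \<omega>"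
proof -
  define C where "C = k + \<kappa> 0"
  have "C \<ge> 0"
    using k[of 0] by (simp add: C_def)
  have pointwise: "a t \<omega> - C \<le> \<kappa> (a t \<omega>) - \<kappa> 0" if "t \<in> {0..T}" for t
    using k[OF nonneg[OF that]] by (simp add: C_def)
  have cost_ge: "ereal (T * \<kappa> 0) \<le> cost_int \<kappa> T a \<omega>"
    unfolding cost_int_def by (rule add_increasing2) auto
  show ?thesis
  proof (cases "set_integrable lborel {0..T} (\<lambda>t. a t \<omega>)")
    case True
    have const: "set_integrable lborel {0..T} (\<lambda>t. C)"
      unfolding set_integrable_def using T by (intro integrable_indicator) (auto simp: emeasure_lborel_Icc_eq)
    have "(\<integral>t\<in>{0..T}. a t \<omega> \<partial>lborel) - T * C = (\<integral>t\<in>{0..T}. a t \<omega> - C \<partial>lborel)"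
      using T by (simp add: set_integral_diff(2)[OF True const] set_integral_const)
    also have "ereal \<dots> \<le> enn2ereal (\<integral>\<^sup>+t. indicator {0..T} t * ennreal (\<kappa> (a t \<omega>) - \<kappa> 0) \<partial>lborel)"
      unfolding set_lebesgue_integral_def
      by (rule integral_le_nn_integral)
         (auto simp: indicator_def intro!: ennreal_leI pointwise)
    finally have "ereal (T * \<kappa> 0) + ereal ((\<integral>t\<in>{0..T}. a t \<omega> \<partial>lborel) - T * C) \<le> cost_int \<kappa> T a \<omega>"
      unfolding cost_int_def by (rule add_left_mono)
    then show ?thesis
      by (simp add: C_def algebra_simps)
  next
    case False
    then have "(\<integral>t\<in>{0..T}. a t \<omega> \<partial>lborel) = 0"
      by (simp add: set_integrable_def set_lebesgue_integral_def not_integrable_integral_eq)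
    moreover have "- (T * k) \<le> T * \<kappa> 0"
      using mult_left_mono[OF \<open>C \<ge> 0\<close> T] by (simp add: C_def algebra_simps)
    ultimately show ?thesis
      using cost_ge by (simp add: order_trans[rotated])
  qed
qed

lemma XT_minus_cost_int_le:
  assumes kappa: "cost_function \<kappa>" and a: "a \<in> H2 M T B" and \<omega>: "\<omega> \<in> space M" and T: "T \<ge> 0"
  shows "ereal (XT x0 T B a \<omega>) - cost_int \<kappa> T a \<omega> \<le> ereal (x0 + B T \<omega> + T * kappa_tilde \<kappa> 1)"
proof -
  have "ereal ((\<integral>t\<in>{0..T}. a t \<omega> \<partial>lborel) - T * kappa_tilde \<kappa> 1) \<le> cost_int \<kappa> T a \<omega>"
    using a \<omega> T cost_function_conjugate(2,3)[OF kappa, of 1]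
    by (intro cost_int_ge) (auto simp: H2_def)
  then have "ereal (XT x0 T B a \<omega>) - cost_int \<kappa> T a \<omega>
      \<le> ereal (XT x0 T B a \<omega>) - ereal ((\<integral>t\<in>{0..T}. a t \<omega> \<partial>lborel) - T * kappa_tilde \<kappa> 1)"
    by (rule ereal_minus_mono[OF order_refl])
  then show ?thesis
    by (simp add: XT_def algebra_simps)
qed

lemma XT_minus_cost_int_const:
  assumes kappa: "cost_function \<kappa>" and x: "x \<ge> 0" and T: "T \<ge> 0"
  shows "ereal (XT x0 T B (\<lambda>t \<omega>. x) \<omega>) - cost_int \<kappa> T (\<lambda>t \<omega>. x) \<omega> = ereal (x0 + B T \<omega> + T * (x - \<kappa> x))"
proof -
  have "\<kappa> 0 \<le> \<kappa> x"
    using kappa x unfolding cost_function_def by (auto intro: mono_onD)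
  then have "cost_int \<kappa> T (\<lambda>t \<omega>. x) \<omega> = ereal (T * \<kappa> x)"
    using T by (simp add: cost_int_def nn_integral_cmult_indicator mult.commute[of "indicator _ _"]
        flip: ennreal_mult) (simp add: algebra_simps)
  moreover have "XT x0 T B (\<lambda>t \<omega>. x) \<omega> = x0 + T * x + B T \<omega>"
    using T by (simp add: XT_def set_integral_const)
  ultimately show ?thesis
    by (simp add: algebra_simps)
qed

lemma nn_integral_ennpowr_absU_benchmark:
  assumes BM: "brownian_motion M T B" and T: "T > 0"
  shows "(\<integral>\<^sup>+\<omega>. ennpowr (absU \<gamma> (ereal (x0 + B T \<omega> + T * k))) s \<partial>M)
           = ennreal (exp (- \<gamma> * s * (x0 + T * k) + (\<gamma> * s)\<^sup>2 * T / 2))"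
proof -
  have "(\<integral>\<^sup>+\<omega>. ennpowr (absU \<gamma> (ereal (x0 + B T \<omega> + T * k))) s \<partial>M)
      = (\<integral>\<^sup>+\<omega>. ennreal (exp (- \<gamma> * s * (x0 + T * k))) * ennreal (exp ((- \<gamma> * s) * B T \<omega>)) \<partial>M)"
    by (intro nn_integral_cong)
       (simp add: absU_ereal ennpowr_exp algebra_simps flip: ennreal_mult exp_add)
  also have "\<dots> = ennreal (exp (- \<gamma> * s * (x0 + T * k))) * ennreal (exp ((- \<gamma> * s)\<^sup>2 * T / 2))"
  proof -
    have "B T \<in> borel_measurable M"
      using BM T by (simp add: brownian_motion_def)
    then show ?thesis
      using brownian_motion_nn_integral_exp[OF BM T, of "- \<gamma> * s"] by (simp add: nn_integral_cmult)
  qed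
  finally show ?thesis
    by (simp flip: ennreal_mult exp_add)
qed

lemma ereal_uminus_le_uminus_enn2ereal_iff:
  assumes "x \<ge> 0"
  shows "ereal (- x) \<le> - enn2ereal A \<longleftrightarrow> A \<le> ennreal x"
    and "- enn2ereal A \<le> ereal (- x) \<longleftrightarrow> ennreal x \<le> A"
  using assms by (simp_all add: less_eq_ennreal.rep_eq flip: uminus_ereal.simps)

lemma PC_imp_nn_integral_absU_le:
  assumes "PC M T \<kappa> \<gamma> y0 W a"
  shows "(\<integral>\<^sup>+\<omega>. absU \<gamma> (ereal (W \<omega>) - cost_int \<kappa> T a \<omega>) \<partial>M) \<le> ennreal (exp (- \<gamma> * y0))"
  using assms ereal_uminus_le_uminus_enn2ereal_iff(1)[of "exp (- \<gamma> * y0)"]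
  by (simp add: PC_def U_def)

lemma nn_integral_ennpowr_absU_ge:
  assumes BM: "brownian_motion M T B" and T: "T > 0" and kappa: "cost_function \<kappa>"
    and a: "a \<in> H2 M T B" and \<gamma>: "\<gamma> > 0" and s: "s \<ge> 0"
  shows "ennreal (exp (- \<gamma> * s * (x0 + T * kappa_tilde \<kappa> 1) + (\<gamma> * s)\<^sup>2 * T / 2))
           \<le> (\<integral>\<^sup>+\<omega>. ennpowr (absU \<gamma> (ereal (XT x0 T B a \<omega>) - cost_int \<kappa> T a \<omega>)) s \<partial>M)"
  unfolding nn_integral_ennpowr_absU_benchmark[OF BM T, symmetric]
  using XT_minus_cost_int_le[OF kappa a _ less_imp_le[OF T]] \<gamma> s
  by (intro nn_integral_mono ennpowr_mono absU_antimono) auto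

lemma nn_integral_ennpowr_absU_kappa_star:
  assumes BM: "brownian_motion M T B" and T: "T > 0" and kappa: "cost_function \<kappa>"
  defines "astar \<equiv> \<lambda>t \<omega>. kappa_star \<kappa> 1"
  shows "(\<integral>\<^sup>+\<omega>. ennpowr (absU \<gamma> (ereal (XT x0 T B astar \<omega>) - cost_int \<kappa> T astar \<omega>)) s \<partial>M)
           = ennreal (exp (- \<gamma> * s * (x0 + T * kappa_tilde \<kappa> 1) + (\<gamma> * s)\<^sup>2 * T / 2))"
proof -
  have "ereal (XT x0 T B astar \<omega>) - cost_int \<kappa> T astar \<omega> = ereal (x0 + B T \<omega> + T * kappa_tilde \<kappa> 1)" for \<omega>
    using XT_minus_cost_int_const[OF kappa cost_function_conjugate(1)[OF kappa, of 1] less_imp_le[OF T]]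
      cost_function_conjugate(3)[OF kappa, of 1]
    by (simp add: astar_def)
  then show ?thesis
    by (simp add: nn_integral_ennpowr_absU_benchmark[OF BM T])
qed

lemma nn_integral_ennpowr_absU_Hoelder:
  assumes BM: "brownian_motion M T B" and T: "T > 0" and kappa: "cost_function \<kappa>"
    and W: "W \<in> Wset M T B" and a: "a \<in> H2 M T B" and \<gamma>P: "\<gamma>P > 0" and \<gamma>A: "\<gamma>A > 0"
  defines "r \<equiv> \<gamma>A / (\<gamma>A + \<gamma>P)"
  shows "(\<integral>\<^sup>+\<omega>. ennpowr (absU \<gamma>P (ereal (XT x0 T B a \<omega>) - cost_int \<kappa> T a \<omega>)) r \<partial>M)
    \<le> ennpowr (\<integral>\<^sup>+\<omega>. absU \<gamma>P (ereal (XT x0 T B a \<omega> - W \<omega>)) \<partial>M) r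
       * ennpowr (\<integral>\<^sup>+\<omega>. absU \<gamma>A (ereal (W \<omega>) - cost_int \<kappa> T a \<omega>) \<partial>M) (1 - r)"
proof -
  have r: "0 < r" "r < 1" and exponents: "\<gamma>P * r = \<gamma>A * (1 - r)"
    using \<gamma>P \<gamma>A by (auto simp: r_def field_simps)
  have [measurable]: "W \<in> borel_measurable M" "XT x0 T B a \<in> borel_measurable M"
      "cost_int \<kappa> T a \<in> borel_measurable M"
    using Wset_measurable[OF BM _ W] XT_measurable[OF BM _ a] T kappa
      cost_int_measurable[OF BM _ a] by (auto simp: cost_function_def)
  have "cost_int \<kappa> T a \<omega> \<noteq> - \<infinity>" for \<omega>
    unfolding cost_int_def by simp
  then have "(\<integral>\<^sup>+\<omega>. ennpowr (absU \<gamma>P (ereal (XT x0 T B a \<omega>) - cost_int \<kappa> T a \<omega>)) r \<partial>M)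
    = (\<integral>\<^sup>+\<omega>. ennpowr (absU \<gamma>P (ereal (XT x0 T B a \<omega> - W \<omega>))) r
         * ennpowr (absU \<gamma>A (ereal (W \<omega>) - cost_int \<kappa> T a \<omega>)) (1 - r) \<partial>M)"
    using r exponents \<gamma>P \<gamma>A by (intro nn_integral_cong ennpowr_absU_split) auto
  also have "\<dots> \<le> ennpowr (\<integral>\<^sup>+\<omega>. absU \<gamma>P (ereal (XT x0 T B a \<omega> - W \<omega>)) \<partial>M) r
       * ennpowr (\<integral>\<^sup>+\<omega>. absU \<gamma>A (ereal (W \<omega>) - cost_int \<kappa> T a \<omega>) \<partial>M) (1 - r)"
    using r by (intro nn_integral_Hoelder) measurable
  finally show ?thesis .
qed

lemma ennpowr_nn_integral_absU_bounds:
  assumes BM: "brownian_motion M T B" and T: "T > 0" and kappa: "cost_function \<kappa>"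
    and \<gamma>P: "\<gamma>P > 0" and \<gamma>A: "\<gamma>A > 0"
  defines "r \<equiv> \<gamma>A / (\<gamma>A + \<gamma>P)"
    and "c \<equiv> exp (T * \<gamma>P * (- kappa_tilde \<kappa> 1 + \<gamma>P * \<gamma>A / (2 * (\<gamma>A + \<gamma>P))))"
  shows "a \<in> H2 M T B \<Longrightarrow> ennreal (exp (- \<gamma>P * x0) * c)
      \<le> ennpowr (\<integral>\<^sup>+\<omega>. ennpowr (absU \<gamma>P (ereal (XT x0 T B a \<omega>) - cost_int \<kappa> T a \<omega>)) r \<partial>M) (1 / r)"
    and "ennpowr (\<integral>\<^sup>+\<omega>. ennpowr (absU \<gamma>P (ereal (XT x0 T B (\<lambda>t \<omega>. kappa_star \<kappa> 1) \<omega>)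
            - cost_int \<kappa> T (\<lambda>t \<omega>. kappa_star \<kappa> 1) \<omega>)) r \<partial>M) (1 / r)
      = ennreal (exp (- \<gamma>P * x0) * c)"
proof -
  define q where "q = - \<gamma>P * r * (x0 + T * kappa_tilde \<kappa> 1) + (\<gamma>P * r)\<^sup>2 * T / 2"
  have r: "r > 0"
    using \<gamma>P \<gamma>A by (simp add: r_def)
  have "q = r * (- \<gamma>P * (x0 + T * kappa_tilde \<kappa> 1) + T * \<gamma>P * (\<gamma>P * r / 2))"
    by (simp add: q_def power2_eq_square algebra_simps)
  then have "1 / r * q = - \<gamma>P * (x0 + T * kappa_tilde \<kappa> 1) + T * \<gamma>P * (\<gamma>P * r / 2)"
    using r by simp
  also have "\<gamma>P * r / 2 = \<gamma>P * \<gamma>A / (2 * (\<gamma>A + \<gamma>P))"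
    by (simp add: r_def)
  finally have "1 / r * q = - \<gamma>P * x0 + T * \<gamma>P * (- kappa_tilde \<kappa> 1 + \<gamma>P * \<gamma>A / (2 * (\<gamma>A + \<gamma>P)))"
    by (simp add: algebra_simps)
  then have q: "ennpowr (ennreal (exp q)) (1 / r) = ennreal (exp (- \<gamma>P * x0) * c)"
    by (simp add: ennpowr_exp c_def flip: exp_add)
  show "ennreal (exp (- \<gamma>P * x0) * c)
      \<le> ennpowr (\<integral>\<^sup>+\<omega>. ennpowr (absU \<gamma>P (ereal (XT x0 T B a \<omega>) - cost_int \<kappa> T a \<omega>)) r \<partial>M) (1 / r)"
    if a: "a \<in> H2 M T B"
    unfolding q[symmetric] q_def
    using nn_integral_ennpowr_absU_ge[OF BM T kappa a \<gamma>P, of r x0] r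
    by (intro ennpowr_mono) auto
  show "ennpowr (\<integral>\<^sup>+\<omega>. ennpowr (absU \<gamma>P (ereal (XT x0 T B (\<lambda>t \<omega>. kappa_star \<kappa> 1) \<omega>)
            - cost_int \<kappa> T (\<lambda>t \<omega>. kappa_star \<kappa> 1) \<omega>)) r \<partial>M) (1 / r)
      = ennreal (exp (- \<gamma>P * x0) * c)"
    unfolding q[symmetric] q_def nn_integral_ennpowr_absU_kappa_star[OF BM T kappa] ..
qed

lemma principal_expected_utility_le:
  assumes BM: "brownian_motion M T B" and T: "T > 0" and kappa: "cost_function \<kappa>"
    and \<gamma>P: "\<gamma>P > 0" and \<gamma>A: "\<gamma>A > 0"
    and W: "W \<in> Wset M T B" and a: "a \<in> H2 M T B" and pc: "PC M T \<kappa> \<gamma>A y0 W a"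
  defines "c \<equiv> exp (T * \<gamma>P * (- kappa_tilde \<kappa> 1 + \<gamma>P * \<gamma>A / (2 * (\<gamma>A + \<gamma>P))))"
  shows "- enn2ereal (\<integral>\<^sup>+\<omega>. absU \<gamma>P (ereal (XT x0 T B a \<omega> - W \<omega>)) \<partial>M) \<le> ereal (U \<gamma>P (x0 - y0) * c)"
proof -
  define r where "r = \<gamma>A / (\<gamma>A + \<gamma>P)"
  let ?A = "\<integral>\<^sup>+\<omega>. absU \<gamma>P (ereal (XT x0 T B a \<omega> - W \<omega>)) \<partial>M"
  have r: "0 < r" "r < 1"
    using \<gamma>P \<gamma>A by (auto simp: r_def)
  have "1 - r = \<gamma>P / (\<gamma>A + \<gamma>P)"
    using \<gamma>P \<gamma>A by (simp add: r_def field_simps)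
  then have "1 / r * ((1 - r) * (- \<gamma>A * y0)) = - \<gamma>P * y0"
    using \<gamma>P \<gamma>A by (simp add: r_def)
  then have exponent: "ennpowr (ennreal (exp (- \<gamma>A * y0))) ((1 - r) / r) = ennreal (exp (- \<gamma>P * y0))"
    by (simp add: ennpowr_exp)
  have "ennreal (exp (- \<gamma>P * x0) * c)
      \<le> ennpowr (\<integral>\<^sup>+\<omega>. ennpowr (absU \<gamma>P (ereal (XT x0 T B a \<omega>) - cost_int \<kappa> T a \<omega>)) r \<partial>M) (1 / r)"
    unfolding r_def c_def by (rule ennpowr_nn_integral_absU_bounds(1)[OF BM T kappa \<gamma>P \<gamma>A a])
  also have "\<dots> \<le> ennpowr (ennpowr ?A r
      * ennpowr (\<integral>\<^sup>+\<omega>. absU \<gamma>A (ereal (W \<omega>) - cost_int \<kappa> T a \<omega>) \<partial>M) (1 - r)) (1 / r)"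
    using nn_integral_ennpowr_absU_Hoelder[OF BM T kappa W a \<gamma>P \<gamma>A, folded r_def] r
    by (intro ennpowr_mono) auto
  also have "\<dots> \<le> ennpowr (ennpowr ?A r * ennpowr (ennreal (exp (- \<gamma>A * y0))) (1 - r)) (1 / r)"
    using PC_imp_nn_integral_absU_le[OF pc] r by (intro ennpowr_mono mult_left_mono) auto
  also have "\<dots> = ?A * ennreal (exp (- \<gamma>P * y0))"
    using r exponent by (simp add: ennpowr_mult ennpowr_ennpowr)
  finally have "ennreal (exp (- \<gamma>P * y0)) * ennreal (exp (- \<gamma>P * (x0 - y0)) * c)
      \<le> ennreal (exp (- \<gamma>P * y0)) * ?A"
    by (simp add: c_def algebra_simps flip: ennreal_mult exp_add)
  then have "ennreal (exp (- \<gamma>P * (x0 - y0)) * c) \<le> ?A"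
    by (simp add: ennreal_mult_le_mult_iff)
  then show ?thesis
    by (simp add: U_def c_def ereal_uminus_le_uminus_enn2ereal_iff)
qed

theorem proposition3p2:
  fixes M :: "'a measure" and B :: "real \<Rightarrow> 'a \<Rightarrow> real" and \<kappa> :: "real \<Rightarrow> real"
    and T x0 y0 \<gamma>P \<gamma>A :: real
  assumes T: "T > 0" and gP: "\<gamma>P > 0" and gA: "\<gamma>A > 0"
    and BM: "brownian_motion M T B"
    and kappa: "cost_function \<kappa>"
  defines "r \<equiv> \<gamma>A / (\<gamma>A + \<gamma>P)"
    and "c \<equiv> exp (T * \<gamma>P * (- kappa_tilde \<kappa> 1 + \<gamma>P * \<gamma>A / (2 * (\<gamma>A + \<gamma>P))))"
  shows "(\<forall>W a. W \<in> Wset M T B \<and> a \<in> H2 M T B \<and> PC M T \<kappa> \<gamma>A y0 W a \<longrightarrow>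
            ennpowr (\<integral>\<^sup>+\<omega>. ennpowr (absU \<gamma>P (ereal (XT x0 T B a \<omega>) - cost_int \<kappa> T a \<omega>)) r \<partial>M) (1 / r)
              \<ge> ennreal (exp (- \<gamma>P * x0) * c)
          \<and> - enn2ereal (\<integral>\<^sup>+\<omega>. absU \<gamma>P (ereal (XT x0 T B a \<omega> - W \<omega>)) \<partial>M)
              \<le> ereal (U \<gamma>P (x0 - y0) * c))
     \<and> (let astar = (\<lambda>t \<omega>. kappa_star \<kappa> 1) in
          ennpowr (\<integral>\<^sup>+\<omega>. ennpowr (absU \<gamma>P (ereal (XT x0 T B astar \<omega>) - cost_int \<kappa> T astar \<omega>)) r \<partial>M) (1 / r)
            = ennreal (exp (- \<gamma>P * x0) * c))"
  using ennpowr_nn_integral_absU_bounds[OF BM T kappa gP gA]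
    principal_expected_utility_le[OF BM T kappa gP gA]
  unfolding r_def c_def Let_def by blast

end
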